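(* Let $\mathcal{E}$ be a finite-dimensional Euclidean space and let $\mathcal{K}\subseteq\mathcal{E}$ be a closed convex cone with $\dim\mathcal{K}\le 4$. Then $\mathcal{K}$ is amenable if and only if $\mathcal{K}$ is projectionally exposed.
   Context: A face of a closed convex set $C$ is a closed convex subset $F\subseteq C$ such that whenever $x,y\in C$ and $\alpha x+(1-\alpha)y\in F$ for some $\alpha\in(0,1)$, then $x,y\in F$. A closed convex cone $\mathcal{K}$ is amenable if for every face $\mathcal{F}$ of $\mathcal{K}$ there exists $\kappa>0$ such that $\operatorname{dist}(x,\mathcal{F})\le\kappa\operatorname{dist}(x,\mathcal{K})$ for all $x\in\operatorname{span}\mathcal{F}$. A face $\mathcal{F}$ of $\mathcal{K}$ is projectionally exposed if there is an idempotent linear map $P:\mathcal{E}\to\mathcal{E}$ (not necessarily orthogonal) with $P(\mathcal{K})=\mathcal{F}$; $\mathcal{K}$ is projectionally exposed if every face is. *)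

theory Defs
  imports "HOL-Analysis.Analysis"
begin

text \<open>Faces in the sense of the paper: closed convex subsets F of C with the
extremality property; we use the library notion face_of (which includes
convexity and extremality along open segments) plus closedness. Faces are
taken nonempty (standard convention for faces of cones; the smallest face of a
nonempty cone is {0}).\<close>

definition is_face :: "'a::euclidean_space set \<Rightarrow> 'a set \<Rightarrow> bool" where
  "is_face F C \<longleftrightarrow> F face_of C \<and> closed F \<and> F \<noteq> {}"

definition amenable :: "'a::euclidean_space set \<Rightarrow> bool" where
  "amenable K \<longleftrightarrow>
     (\<forall>F. is_face F K \<longrightarrow>
        (\<exists>\<kappa>>0. \<forall>x\<in>span F. infdist x F \<le> \<kappa> * infdist x K))"

definition projectionally_exposed_face :: "'a::euclidean_space set \<Rightarrow> 'a set \<Rightarrow> bool" where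
  "projectionally_exposed_face F K \<longleftrightarrow>
     (\<exists>P. linear P \<and> P \<circ> P = P \<and> P ` K = F)"

definition projectionally_exposed :: "'a::euclidean_space set \<Rightarrow> bool" where
  "projectionally_exposed K \<longleftrightarrow> (\<forall>F. is_face F K \<longrightarrow> projectionally_exposed_face F K)"

end

theory Submission
  imports Defs
begin

text \<open>A projection \<open>P\<close> with \<open>P K = F\<close> fixes \<open>span F\<close> and is Lipschitz, which gives the error
  bound defining amenability. Conversely, let \<open>L\<close> be the lineality space of \<open>K\<close>. For every closed
  convex cone, the faces \<open>K\<close>, \<open>L\<close> and \<open>L + cone {f}\<close> are projectionally exposed: the projection
  is the orthogonal projection onto \<open>L\<close> plus terms \<open>(a \<bullet> x) f\<close> with \<open>a\<close> a separating functional. An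
  amenable facet is projectionally exposed via \<open>x \<mapsto> x - (u \<bullet> x) w\<close>, where \<open>u\<close> is its inner normal
  and \<open>w\<close> is \<open>u\<close> tilted towards a relative interior point. When \<open>dim K \<le> 4\<close>, the only
  remaining case is a two-dimensional face of a pointed cone, which is generated by two rays;
  the error bound extends the functionals exposing each ray within the face to functionals that
  are nonnegative on \<open>K\<close>, and these again define the projection.\<close>

lemma cone_iff_conic: "cone S \<longleftrightarrow> conic S"
  by (auto simp: cone_def conic_def)

lemma le_infdistI:
  assumes "A \<noteq> {}" "\<And>a. a \<in> A \<Longrightarrow> d \<le> dist x a"
  shows "d \<le> infdist x A"
  using assms by (simp add: infdist_notempty cINF_greatest)

lemma infdist_lessE:
  assumes "A \<noteq> {}" "infdist x A < d"
  obtains a where "a \<in> A" "dist x a < d"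
proof -
  have "bdd_below (dist x ` A)" by (rule bdd_belowI[of _ 0]) auto
  then show ?thesis using assms that by (auto simp: infdist_notempty cINF_less_iff)
qed

lemma cone_add:
  assumes "convex C" "cone C" "x \<in> C" "y \<in> C"
  shows "x + y \<in> C"
  using assms convex_cone by blast

lemma cone_sum:
  assumes "convex C" "cone C" "C \<noteq> {}" "finite A" "A \<subseteq> C" "\<And>v. v \<in> A \<Longrightarrow> 0 \<le> c v"
  shows "(\<Sum>v\<in>A. c v *\<^sub>R v) \<in> C"
  using assms(4-6)
proof (induction A rule: finite_induct)
  case empty
  then show ?case using assms(2,3) cone_contains_0 by auto
next
  case (insert v A)
  then show ?case using assms(1,2) by (simp add: cone_add mem_cone)
qed

lemma face_of_cone: "cone K \<Longrightarrow> F face_of K \<Longrightarrow> cone F"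
  by (simp add: cone_iff_conic face_of_conic)

lemma face_of_cone_contains_0:
  assumes "cone K" "F face_of K" "F \<noteq> {}"
  shows "0 \<in> F"
  using cone_contains_0[OF face_of_cone[OF assms(1,2)]] assms(3) by simp

lemma affine_hull_face_of_cone:
  assumes "cone K" "F face_of K" "F \<noteq> {}"
  shows "affine hull F = span F"
  using face_of_cone_contains_0[OF assms] by (simp add: affine_hull_span_0 hull_inc)

lemma face_of_cone_Int_span_subset:
  fixes K :: "'a::euclidean_space set"
  assumes "F face_of K" "convex K" "cone K" "F \<noteq> {}"
  shows "K \<inter> span F \<subseteq> F"
proof -
  have "K \<inter> span F \<subseteq> affine hull F \<inter> K" using affine_hull_face_of_cone[OF assms(3,1,4)] by blast
  then show ?thesis by (simp only: face_of_imp_eq_affine_Int[OF assms(2,1), symmetric])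
qed

lemma cone_separation:
  fixes C :: "'a::euclidean_space set"
  assumes "closed C" "convex C" "cone C" "C \<noteq> {}" "z \<notin> C"
  obtains a where "\<And>x. x \<in> C \<Longrightarrow> 0 \<le> a \<bullet> x" "a \<bullet> z < 0"
proof -
  obtain a b where ab: "a \<bullet> z < b" "\<And>x. x \<in> C \<Longrightarrow> b < a \<bullet> x"
    using separating_hyperplane_closed_point[OF assms(2,1,5)] by blast
  have "0 \<in> C" using cone_contains_0[OF assms(3)] assms(4) by simp
  then have "b < 0" using ab(2)[of 0] by simp
  have "0 \<le> a \<bullet> x" if x: "x \<in> C" for x
  proof (rule ccontr)
    assume "\<not> 0 \<le> a \<bullet> x"
    then have "b / (a \<bullet> x) \<ge> 0" and eq: "a \<bullet> ((b / (a \<bullet> x)) *\<^sub>R x) = b"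
      using \<open>b < 0\<close> by (simp_all add: divide_nonpos_neg)
    then have "(b / (a \<bullet> x)) *\<^sub>R x \<in> C" using mem_cone[OF assms(3) x] by blast
    then show False using ab(2) eq by fastforce
  qed
  moreover have "a \<bullet> z < 0" using ab(1) \<open>b < 0\<close> by linarith
  ultimately show ?thesis by (rule that)
qed

section \<open>Lineality space\<close>

definition lineality_space :: "'a::real_vector set \<Rightarrow> 'a set" where
  "lineality_space K = {x. x \<in> K \<and> - x \<in> K}"

lemma subspace_lineality_space:
  assumes "convex K" "cone K" "K \<noteq> {}"
  shows "subspace (lineality_space K)"
  unfolding subspace_def
proof (intro conjI ballI allI)
  show "0 \<in> lineality_space K"
    using cone_contains_0[OF assms(2)] assms(1,3) by (simp add: lineality_space_def)
next
  fix x y assume "x \<in> lineality_space K" "y \<in> lineality_space K"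
  then show "x + y \<in> lineality_space K"
    using cone_add[OF assms(1,2), of x y] cone_add[OF assms(1,2), of "- x" "- y"]
    by (simp add: lineality_space_def)
next
  fix c :: real and x assume x: "x \<in> lineality_space K"
  have "c *\<^sub>R x \<in> K \<and> - (c *\<^sub>R x) \<in> K"
  proof (cases "0 \<le> c")
    case True
    then show ?thesis
      using x mem_cone[OF assms(2), of x c] mem_cone[OF assms(2), of "- x" c]
      by (simp add: lineality_space_def)
  next
    case False
    then show ?thesis
      using x mem_cone[OF assms(2), of x "- c"] mem_cone[OF assms(2), of "- x" "- c"]
      by (simp add: lineality_space_def)
  qed
  then show "c *\<^sub>R x \<in> lineality_space K" by (simp add: lineality_space_def)
qed

lemma lineality_space_subset_face:
  assumes "F face_of K" "cone K" "F \<noteq> {}"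
  shows "lineality_space K \<subseteq> F"
proof
  fix x assume x: "x \<in> lineality_space K"
  have "0 \<in> F" using face_of_cone_contains_0[OF assms(2,1,3)] .
  moreover have "0 \<in> open_segment x (- x)" if "x \<noteq> 0"
    using midpoint_in_open_segment[of x "- x"] that
    by (auto simp: midpoint_def eq_neg_iff_add_eq_0 simp flip: scaleR_2)
  ultimately show "x \<in> F"
    using x face_ofD[OF assms(1), of 0 x "- x"] by (cases "x = 0") (auto simp: lineality_space_def)
qed

lemma lineality_space_orthogonal:
  assumes "\<And>x. x \<in> K \<Longrightarrow> 0 \<le> a \<bullet> x" "l \<in> lineality_space K"
  shows "a \<bullet> l = 0"
  using assms(1)[of l] assms(1)[of "- l"] assms(2) by (simp add: lineality_space_def)

lemma orthogonal_projection_exists: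
  fixes L :: "'a::euclidean_space set"
  assumes "subspace L"
  obtains Q where "linear Q" "\<And>x. Q x \<in> L" "\<And>x. x \<in> L \<Longrightarrow> Q x = x"
    "\<And>x. (\<And>l. l \<in> L \<Longrightarrow> x \<bullet> l = 0) \<Longrightarrow> Q x = 0"
proof -
  obtain B where B: "B \<subseteq> L" "pairwise orthogonal B" "\<And>x. x \<in> B \<Longrightarrow> norm x = 1"
    "independent B" "span B = L"
    using orthonormal_basis_subspace[OF assms] by metis
  define Q where "Q x = (\<Sum>b\<in>B. (x \<bullet> b) *\<^sub>R b)" for x
  have "linear Q"
    by (rule linearI) (simp_all add: Q_def inner_add_left scaleR_add_left sum.distrib scaleR_sum_right)
  moreover have "Q x \<in> L" for x
  proof -
    have "Q x \<in> span B" unfolding Q_def by (intro span_sum span_scale span_base)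
    then show ?thesis using B(5) by simp
  qed
  moreover have "Q x = x" if "x \<in> L" for x
    unfolding Q_def using orthonormal_basis_expand[OF B(2,3)] that B(4,5) independent_imp_finite by auto
  moreover have "Q x = 0" if "\<And>l. l \<in> L \<Longrightarrow> x \<bullet> l = 0" for x
    unfolding Q_def using that B(1) by (intro sum.neutral) auto
  ultimately show ?thesis using that by blast
qed

section \<open>Projections built from dual functionals\<close>

lemma projectionally_exposed_faceI:
  assumes "linear P" "\<And>x. P (P x) = P x" "\<And>k. k \<in> K \<Longrightarrow> P k \<in> F"
    "\<And>f. f \<in> F \<Longrightarrow> P f = f" "F \<subseteq> K"
  shows "projectionally_exposed_face F K"
proof -
  have "P ` K = F" using assms(3-5) by (auto intro: rev_image_eqI)
  moreover have "P \<circ> P = P" using assms(2) by (simp add: fun_eq_iff)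
  ultimately show ?thesis unfolding projectionally_exposed_face_def using assms(1) by blast
qed

lemma sum_biorthogonal_expansion:
  assumes "finite G" "y \<in> G" "\<And>g. g \<in> G \<Longrightarrow> a g \<bullet> y = (if g = y then 1 else 0)"
  shows "(\<Sum>g\<in>G. (a g \<bullet> y) *\<^sub>R g) = y"
proof -
  have "(\<Sum>g\<in>G. (a g \<bullet> y) *\<^sub>R g) = (\<Sum>g\<in>G. if g = y then g else 0)"
    using assms(3) by (intro sum.cong) auto
  also have "\<dots> = y" using assms(1,2) by (simp add: sum.delta)
  finally show ?thesis .
qed

lemma projectionally_exposed_face_if_dual_functionals:
  fixes K :: "'a::euclidean_space set"
  assumes K: "convex K" "cone K"
    and F: "F face_of K" "F \<noteq> {}"
    and G: "finite G" "G \<subseteq> F" "F \<subseteq> span (lineality_space K \<union> G)"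
      "\<And>g l. g \<in> G \<Longrightarrow> l \<in> lineality_space K \<Longrightarrow> g \<bullet> l = 0"
    and a: "\<And>g x. g \<in> G \<Longrightarrow> x \<in> K \<Longrightarrow> 0 \<le> a g \<bullet> x"
      "\<And>g h. g \<in> G \<Longrightarrow> h \<in> G \<Longrightarrow> a g \<bullet> h = (if g = h then 1 else 0)"
  shows "projectionally_exposed_face F K"
proof -
  let ?L = "lineality_space K"
  have FK: "F \<subseteq> K" using F(1) face_of_imp_subset by blast
  have LF: "?L \<subseteq> F" using lineality_space_subset_face[OF F(1) K(2) F(2)] .
  have "subspace ?L" using subspace_lineality_space[OF K] FK F(2) by blast
  then obtain Q where Q: "linear Q" "\<And>x. Q x \<in> ?L" "\<And>x. x \<in> ?L \<Longrightarrow> Q x = x"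
    "\<And>x. (\<And>l. l \<in> ?L \<Longrightarrow> x \<bullet> l = 0) \<Longrightarrow> Q x = 0"
    using orthogonal_projection_exists by blast
  define P where "P x = Q x + (\<Sum>g\<in>G. (a g \<bullet> x) *\<^sub>R g)" for x
  have linP: "linear P"
    by (rule linearI) (simp_all add: P_def linear_add[OF Q(1)] linear_scale[OF Q(1)]
        inner_add_right sum.distrib scaleR_add_left scaleR_sum_right algebra_simps)
  have "P y = y" if "y \<in> ?L \<union> G" for y
  proof (cases "y \<in> G")
    case True
    then show ?thesis
      using sum_biorthogonal_expansion[OF G(1) True a(2)] Q(4) G(4) by (simp add: P_def)
  next
    case False
    then show ?thesis using that Q(3) lineality_space_orthogonal[OF a(1)] by (simp add: P_def)
  qed
  then have fix_span: "P x = x" if "x \<in> span (?L \<union> G)" for x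
    using linear_eq_on_span[OF linP linear_id, of "?L \<union> G" x] that by simp
  have "P x \<in> span (?L \<union> G)" for x
  proof -
    have "Q x \<in> span (?L \<union> G)" using Q(2) by (simp add: span_base)
    moreover have "(\<Sum>g\<in>G. (a g \<bullet> x) *\<^sub>R g) \<in> span (?L \<union> G)"
      by (intro span_sum span_scale) (simp add: span_base)
    ultimately show ?thesis unfolding P_def by (rule span_add)
  qed
  then have "P (P x) = P x" for x using fix_span by simp
  moreover have "P k \<in> F" if "k \<in> K" for k
  proof -
    have cF: "convex F" "cone F" using face_of_imp_convex[OF F(1)] face_of_cone[OF K(2) F(1)] .
    have "(\<Sum>g\<in>G. (a g \<bullet> k) *\<^sub>R g) \<in> F" using cone_sum[OF cF F(2) G(1,2)] a(1) that by simp
    moreover have "Q k \<in> F" using Q(2) LF by blast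
    ultimately show ?thesis unfolding P_def using cone_add[OF cF] by blast
  qed
  moreover have "P f = f" if "f \<in> F" for f using fix_span G(3) that by blast
  ultimately show ?thesis using projectionally_exposed_faceI[OF linP] FK by blast
qed

lemma projectionally_exposed_face_dim_le_lineality:
  fixes K :: "'a::euclidean_space set"
  assumes "convex K" "cone K" "F face_of K" "F \<noteq> {}" "dim F \<le> dim (lineality_space K)"
  shows "projectionally_exposed_face F K"
proof (rule projectionally_exposed_face_if_dual_functionals[where G = "{}"])
  have "lineality_space K \<subseteq> F" using lineality_space_subset_face assms(2-4) by blast
  then have "span (lineality_space K) = span F" using dim_eq_span assms(5) by blast
  then show "F \<subseteq> span (lineality_space K \<union> {})" using span_superset by auto
qed (use assms in auto)

lemma projectionally_exposed_face_dim_lineality_Suc: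
  fixes K :: "'a::euclidean_space set"
  assumes K: "closed K" "convex K" "cone K"
    and F: "F face_of K" "F \<noteq> {}" "dim F = dim (lineality_space K) + 1"
  shows "projectionally_exposed_face F K"
proof -
  let ?L = "lineality_space K"
  have FK: "F \<subseteq> K" using F(1) face_of_imp_subset by blast
  have LF: "?L \<subseteq> F" using lineality_space_subset_face[OF F(1) K(3) F(2)] .
  have sL: "subspace ?L" using subspace_lineality_space[OF K(2,3)] FK F(2) by blast
  have cF: "convex F" "cone F" using face_of_imp_convex[OF F(1)] face_of_cone[OF K(3) F(1)] .
  have "\<not> F \<subseteq> ?L" using dim_subset[of F ?L] F(3) by linarith
  then obtain f0 where f0: "f0 \<in> F" "f0 \<notin> ?L" by blast
  obtain y f where yf: "y \<in> span ?L" "\<And>w. w \<in> span ?L \<Longrightarrow> orthogonal f w" "f0 = y + f"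
    using orthogonal_subspace_decomp_exists by blast
  have spanL: "span ?L = ?L" using sL by (simp add: span_eq_iff)
  have yL: "y \<in> ?L" using yf(1) unfolding spanL .
  have "- y \<in> F" using LF yL subspace_neg[OF sL] by blast
  then have fF: "f \<in> F" using cone_add[OF cF f0(1)] yf(3) by fastforce
  have fL: "f \<notin> ?L"
    using f0(2) yf(3) subspace_add[OF sL yL] by fastforce
  have "f \<notin> span ?L" using fL unfolding spanL .
  have "span (insert f ?L) = span F"
  proof (rule dim_eq_span)
    show "insert f ?L \<subseteq> F" using fF LF by blast
    show "dim F \<le> dim (insert f ?L)" using \<open>f \<notin> span ?L\<close> F(3) by (simp add: dim_insert)
  qed
  then have span_F: "F \<subseteq> span (?L \<union> {f})" using span_superset[of F] by simp
  have "- f \<notin> K" using fL fF FK by (auto simp: lineality_space_def)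
  then obtain a where a: "\<And>x. x \<in> K \<Longrightarrow> 0 \<le> a \<bullet> x" "a \<bullet> (- f) < 0"
    using cone_separation[OF K] FK F(2) by blast
  have f_orth: "f \<bullet> l = 0" if "l \<in> ?L" for l
    using yf(2)[OF span_base[OF that]] by (simp add: orthogonal_def)
  show ?thesis
  proof (rule projectionally_exposed_face_if_dual_functionals
      [OF K(2,3) F(1,2) _ _ span_F, where a = "\<lambda>_. a /\<^sub>R (a \<bullet> f)"])
    show "0 \<le> (a /\<^sub>R (a \<bullet> f)) \<bullet> x" if "x \<in> K" for x using a that by simp
  qed (use fF f_orth a(2) in auto)
qed

section \<open>Facets\<close>

lemma span_Int_hyperplane_eq_codim_1:
  fixes u :: "'a::euclidean_space"
  assumes "span A \<subseteq> span B" "dim A + 1 = dim B" "u \<in> span B" "u \<noteq> 0"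
    "\<And>y. y \<in> span A \<Longrightarrow> u \<bullet> y = 0"
  shows "span B \<inter> {x. u \<bullet> x = 0} = span A"
proof -
  define W where "W = span B \<inter> {x. u \<bullet> x = 0}"
  have sW: "subspace W" unfolding W_def by (intro subspace_inter subspace_span subspace_hyperplane)
  have AW: "span A \<subseteq> W" unfolding W_def using assms(1,5) by auto
  have "u \<notin> W" using assms(4) by (simp add: W_def)
  then have "W \<subset> span B" using assms(3) unfolding W_def by blast
  moreover have "span W = W" using sW span_eq_iff by blast
  ultimately have "span W \<subset> span (span B)" by (metis span_span)
  then have "dim W < dim (span B)" by (rule dim_psubset)
  then show ?thesis using subspace_dim_equal[OF subspace_span sW AW] assms(2) by (simp add: W_def)
qed

lemma face_of_one_side_of_hyperplane:
  assumes "F face_of K" "convex K" "K \<inter> {x. u \<bullet> x = 0} \<subseteq> F" "\<And>y. y \<in> F \<Longrightarrow> u \<bullet> y = 0"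
  shows "(\<forall>k\<in>K. 0 \<le> u \<bullet> k) \<or> (\<forall>k\<in>K. u \<bullet> k \<le> 0)"
proof (rule ccontr)
  assume "\<not> ?thesis"
  then obtain k1 k2 where k: "k1 \<in> K" "k2 \<in> K" "u \<bullet> k1 < 0" "0 < u \<bullet> k2"
    by (auto simp: not_le)
  define c where "c = (u \<bullet> k2) / (u \<bullet> k2 - u \<bullet> k1)"
  have c: "0 < c" "c < 1" using k(3,4) by (auto simp: c_def field_simps)
  define m where "m = (1 - c) *\<^sub>R k2 + c *\<^sub>R k1"
  have "u \<bullet> m = (1 - c) * (u \<bullet> k2) + c * (u \<bullet> k1)" by (simp add: m_def inner_add_right)
  also have "\<dots> = 0" using k(3,4) by (simp add: c_def field_simps)
  finally have "u \<bullet> m = 0" .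
  moreover have "m \<in> K" using convexD[OF assms(2) k(2,1)] c by (simp add: m_def)
  ultimately have "m \<in> F" using assms(3) by blast
  moreover have "m \<in> open_segment k2 k1" using c k(3,4) by (auto simp: m_def in_segment)
  ultimately have "k1 \<in> F" using face_ofD[OF assms(1)] k(1,2) by blast
  then show False using assms(4) k(3) by fastforce
qed

lemma face_of_cone_codim_1_normal:
  fixes K :: "'a::euclidean_space set"
  assumes K: "convex K" "cone K" and F: "F face_of K" "F \<noteq> {}" "dim F + 1 = dim K"
  obtains u where "norm u = 1" "u \<in> span K" "\<And>y. y \<in> span F \<Longrightarrow> u \<bullet> y = 0"
    "\<And>k. k \<in> K \<Longrightarrow> 0 \<le> u \<bullet> k" "\<And>x. x \<in> span K \<Longrightarrow> u \<bullet> x = 0 \<Longrightarrow> x \<in> span F"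
proof -
  have FK: "span F \<subseteq> span K" using span_mono[OF face_of_imp_subset[OF F(1)]] .
  have "span F \<noteq> span K" using F(3) by (metis dim_span less_add_one less_irrefl)
  then have "span F \<subset> span K" using FK by blast
  then obtain u0 where u0: "u0 \<noteq> 0" "u0 \<in> span K" "\<And>y. y \<in> span F \<Longrightarrow> orthogonal u0 y"
    using orthogonal_to_subspace_exists_gen by metis
  have u0F: "u0 \<bullet> y = 0" if "y \<in> span F" for y using u0(3)[OF that] by (simp add: orthogonal_def)
  have hyperplane: "x \<in> span F" if "x \<in> span K" "u0 \<bullet> x = 0" for x
    using span_Int_hyperplane_eq_codim_1[OF FK F(3) u0(2,1) u0F] that by blast
  have "K \<inter> {x. u0 \<bullet> x = 0} \<subseteq> F"
    using hyperplane[OF span_base] face_of_cone_Int_span_subset[OF F(1) K F(2)] by blast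
  moreover have "u0 \<bullet> y = 0" if "y \<in> F" for y using u0F[OF span_base[OF that]] .
  ultimately have "(\<forall>k\<in>K. 0 \<le> u0 \<bullet> k) \<or> (\<forall>k\<in>K. u0 \<bullet> k \<le> 0)"
    by (rule face_of_one_side_of_hyperplane[OF F(1) K(1)])
  then obtain v where v: "v = u0 \<or> v = - u0" "\<And>k. k \<in> K \<Longrightarrow> 0 \<le> v \<bullet> k"
  proof
    assume "\<forall>k\<in>K. u0 \<bullet> k \<le> 0"
    then show ?thesis using that[of "- u0"] by simp
  qed blast
  show ?thesis
  proof (rule that[of "v /\<^sub>R norm v"])
    show "norm (v /\<^sub>R norm v) = 1" using v(1) u0(1) by auto
    show "v /\<^sub>R norm v \<in> span K" using v(1) u0(2) by (auto intro: span_scale span_neg)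
    show "(v /\<^sub>R norm v) \<bullet> y = 0" if "y \<in> span F" for y using v(1) u0F[OF that] by auto
    show "0 \<le> (v /\<^sub>R norm v) \<bullet> k" if "k \<in> K" for k using v(2)[OF that] by simp
    show "x \<in> span F" if "x \<in> span K" "(v /\<^sub>R norm v) \<bullet> x = 0" for x
      using that v(1) u0(1) hyperplane by auto
  qed
qed

text \<open>The point \<open>x = k - (u \<bullet> k) u\<close> lies in \<open>span F\<close> within distance \<open>u \<bullet> k\<close> of \<open>K\<close>, so the
  error bound puts it within \<open>2\<kappa> (u \<bullet> k)\<close> of some \<open>f \<in> F\<close>. Tilting the normal \<open>u\<close> by the
  relative interior point \<open>z\<close> adds \<open>(u \<bullet> k) (2\<kappa>/\<rho>) z\<close>, a multiple of \<open>z\<close> large enough to absorb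
  the error \<open>x - f\<close> inside the cone \<open>F\<close>.\<close>

lemma facet_projection_in_face:
  fixes K :: "'a::euclidean_space set"
  assumes K: "convex K" "cone K" and F: "F face_of K" "F \<noteq> {}"
    and u: "norm u = 1" "u \<in> span K" "\<And>x. x \<in> span K \<Longrightarrow> u \<bullet> x = 0 \<Longrightarrow> x \<in> span F"
    and z: "z \<in> F" "\<rho> > 0" "ball z \<rho> \<inter> span F \<subseteq> F"
    and \<kappa>: "\<kappa> > 0" "\<forall>x\<in>span F. infdist x F \<le> \<kappa> * infdist x K"
    and k: "k \<in> K" "0 < u \<bullet> k"
  shows "k - (u \<bullet> k) *\<^sub>R (u - (2 * \<kappa> / \<rho>) *\<^sub>R z) \<in> F"
proof -
  define t where "t = u \<bullet> k"
  define r where "r = 2 * \<kappa> / \<rho>"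
  have t: "t > 0" and r: "r > 0" using k(2) \<kappa>(1) z(2) by (simp_all add: t_def r_def)
  have cF: "convex F" "cone F" using face_of_imp_convex[OF F(1)] face_of_cone[OF K(2) F(1)] .
  define x where "x = k - t *\<^sub>R u"
  have "u \<bullet> x = 0" using u(1) by (simp add: x_def t_def inner_diff_right dot_square_norm)
  then have xF: "x \<in> span F" using u(2,3) k(1) by (simp add: x_def span_base span_diff span_scale)
  have "infdist x F \<le> \<kappa> * infdist x K" using \<kappa>(2) xF by blast
  also have "\<dots> \<le> \<kappa> * t"
    using infdist_le[OF k(1), of x] u(1) \<kappa>(1) t by (simp add: x_def dist_norm)
  also have "\<dots> < 2 * \<kappa> * t" using \<kappa>(1) t by simp
  finally have "infdist x F < 2 * \<kappa> * t" .
  then obtain f where f: "f \<in> F" "dist x f < 2 * \<kappa> * t" using infdist_lessE F(2) by blast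
  define v where "v = z + (1 / (t * r)) *\<^sub>R (x - f)"
  have "dist z v = dist x f / (t * r)" using t r by (simp add: v_def dist_norm)
  also have "\<dots> < \<rho>" using f(2) t r \<kappa>(1) z(2) by (simp add: r_def field_simps)
  finally have "v \<in> ball z \<rho>" by simp
  moreover have "v \<in> span F" using z(1) xF f(1) by (simp add: v_def span_base span_add span_diff span_scale)
  ultimately have "(t * r) *\<^sub>R v \<in> F" using z(3) mem_cone[OF cF(2)] t r by auto
  moreover have "k - t *\<^sub>R (u - r *\<^sub>R z) = f + (t * r) *\<^sub>R v"
    using t r by (simp add: v_def x_def algebra_simps)
  ultimately show ?thesis using cone_add[OF cF f(1)] by (simp add: t_def r_def)
qed

lemma projectionally_exposed_facet:
  fixes K :: "'a::euclidean_space set"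
  assumes K: "convex K" "cone K" and F: "F face_of K" "F \<noteq> {}" "dim F + 1 = dim K"
    and \<kappa>: "\<kappa> > 0" "\<forall>x\<in>span F. infdist x F \<le> \<kappa> * infdist x K"
  shows "projectionally_exposed_face F K"
proof -
  obtain u where u: "norm u = 1" "u \<in> span K" "\<And>y. y \<in> span F \<Longrightarrow> u \<bullet> y = 0"
    "\<And>k. k \<in> K \<Longrightarrow> 0 \<le> u \<bullet> k" "\<And>x. x \<in> span K \<Longrightarrow> u \<bullet> x = 0 \<Longrightarrow> x \<in> span F"
    using face_of_cone_codim_1_normal[OF K F] by blast
  have aff: "affine hull F = span F" using affine_hull_face_of_cone[OF K(2) F(1,2)] .
  obtain z where "z \<in> rel_interior F"
    using rel_interior_eq_empty face_of_imp_convex[OF F(1)] F(2) by blast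
  then obtain \<rho> where z: "z \<in> F" "\<rho> > 0" "ball z \<rho> \<inter> span F \<subseteq> F"
    using mem_rel_interior_ball rel_interior_subset aff by (metis subsetD)
  define w where "w = u - (2 * \<kappa> / \<rho>) *\<^sub>R z"
  define P where "P x = x - (u \<bullet> x) *\<^sub>R w" for x
  have uw: "u \<bullet> w = 1"
    using u(1) u(3)[OF span_base[OF z(1)]] by (simp add: w_def inner_diff_right dot_square_norm)
  have "linear P" by (rule linearI) (simp_all add: P_def inner_add_right algebra_simps)
  moreover have "P (P x) = P x" for x using uw by (simp add: P_def inner_diff_right)
  moreover have "P f = f" if "f \<in> F" for f using u(3)[OF span_base[OF that]] by (simp add: P_def)
  moreover have "P k \<in> F" if k: "k \<in> K" for k
  proof (cases "u \<bullet> k = 0")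
    case True
    then show ?thesis
      using k u(5)[OF span_base[OF k]] face_of_cone_Int_span_subset[OF F(1) K F(2)] by (auto simp: P_def)
  next
    case False
    then have "0 < u \<bullet> k" using u(4)[OF k] by simp
    then show ?thesis
      using facet_projection_in_face[OF K F(1,2) u(1,2,5) z \<kappa> k] by (simp add: P_def w_def)
  qed
  ultimately show ?thesis using projectionally_exposed_faceI face_of_imp_subset[OF F(1)] by blast
qed

section \<open>Two-dimensional faces of pointed cones\<close>

lemma zero_notin_convex_hull_pointed_cone_sphere:
  fixes C :: "'a::real_normed_vector set"
  assumes "convex C" "cone C" "lineality_space C \<subseteq> {0}"
  shows "0 \<notin> convex hull (C \<inter> sphere 0 1)"
proof
  assume "0 \<in> convex hull (C \<inter> sphere 0 1)"
  then obtain s u where su: "finite s" "s \<subseteq> C \<inter> sphere 0 1" "\<forall>x\<in>s. 0 \<le> u x" "sum u s = 1"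
      "(\<Sum>v\<in>s. u v *\<^sub>R v) = 0"
    unfolding convex_hull_explicit by blast
  have "\<exists>y\<in>s. 0 < u y"
  proof (rule ccontr)
    assume "\<not> ?thesis"
    then have "sum u s \<le> 0" by (intro sum_nonpos) (auto simp: not_less)
    then show False using su(4) by simp
  qed
  then obtain y where y: "y \<in> s" "0 < u y" by blast
  have yC: "y \<in> C" "norm y = 1" using y(1) su(2) by auto
  have "(\<Sum>v\<in>s - {y}. u v *\<^sub>R v) \<in> C"
    using cone_sum[OF assms(1,2), of "s - {y}" u] su(1-3) yC(1) by auto
  moreover have "(\<Sum>v\<in>s - {y}. u v *\<^sub>R v) = - (u y *\<^sub>R y)"
    using sum.remove[OF su(1) y(1), of "\<lambda>v. u v *\<^sub>R v"] su(5) by (simp add: eq_neg_iff_add_eq_0 add.commute)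
  ultimately have "u y *\<^sub>R y \<in> lineality_space C"
    using mem_cone[OF assms(2) yC(1), of "u y"] y(2) by (simp add: lineality_space_def)
  then show False using assms(3) y(2) yC(2) by auto
qed

lemma pointed_cone_norm_le_inner:
  fixes C :: "'a::euclidean_space set"
  assumes "closed C" "convex C" "cone C" "lineality_space C \<subseteq> {0}"
  obtains \<psi> where "\<And>x. x \<in> C \<Longrightarrow> norm x \<le> \<psi> \<bullet> x"
proof -
  let ?D = "convex hull (C \<inter> sphere 0 1)"
  have "compact ?D" using closed_Int_compact[OF assms(1) compact_sphere] by (rule compact_convex_hull)
  then obtain a b where ab: "0 < b" "\<And>x. x \<in> ?D \<Longrightarrow> b < a \<bullet> x"
    using separating_hyperplane_closed_0[OF convex_convex_hull compact_imp_closed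
        zero_notin_convex_hull_pointed_cone_sphere[OF assms(2-4)]] by blast
  have "norm x \<le> (a /\<^sub>R b) \<bullet> x" if x: "x \<in> C" for x
  proof (cases "x = 0")
    case False
    then have "x /\<^sub>R norm x \<in> C \<inter> sphere 0 1" using mem_cone[OF assms(3) x] by simp
    then have "b < a \<bullet> (x /\<^sub>R norm x)" by (rule ab(2)[OF hull_inc])
    then have "b < (a \<bullet> x) / norm x" by (simp add: divide_inverse_commute)
    then have "b * norm x < a \<bullet> x" using False by (simp add: pos_less_divide_eq)
    then show ?thesis using ab(1) by (simp add: field_simps)
  qed simp
  then show ?thesis using that by blast
qed

lemma pointed_cone_dim_2_base_segment:
  fixes F :: "'a::euclidean_space set"
  assumes "closed F" "convex F" "cone F" "lineality_space F \<subseteq> {0}" "dim F = 2"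
  obtains p q \<psi> where "p \<in> F" "q \<in> F"
    "\<And>y. y \<in> F \<Longrightarrow> y \<noteq> 0 \<Longrightarrow> 0 < \<psi> \<bullet> y \<and> y /\<^sub>R (\<psi> \<bullet> y) \<in> closed_segment p q"
proof -
  obtain \<psi> where \<psi>: "\<And>x. x \<in> F \<Longrightarrow> norm x \<le> \<psi> \<bullet> x" using pointed_cone_norm_le_inner[OF assms(1-4)] by blast
  define B where "B = F \<inter> {x. \<psi> \<bullet> x = 1}"
  have \<psi>_pos: "0 < \<psi> \<bullet> y" if "y \<in> F" "y \<noteq> 0" for y
    using \<psi>[OF that(1)] that(2) by (meson order_less_le_trans zero_less_norm_iff)
  have scaled: "y /\<^sub>R (\<psi> \<bullet> y) \<in> B" if "y \<in> F" "y \<noteq> 0" for y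
    using mem_cone[OF assms(3) that(1), of "inverse (\<psi> \<bullet> y)"] \<psi>_pos[OF that] by (simp add: B_def)
  have "\<not> F \<subseteq> {0}" using assms(5) dim_eq_0[of F] by simp
  then have "B \<noteq> {}" using scaled by blast
  moreover have "bounded B" unfolding bounded_iff B_def using \<psi> by (intro exI[of _ 1]) fastforce
  then have "compact B"
    using assms(1) by (simp add: compact_eq_bounded_closed B_def closed_Int closed_hyperplane)
  moreover have "convex B" unfolding B_def using assms(2) by (intro convex_Int convex_hyperplane)
  moreover have "collinear B"
  proof -
    have "affine hull B \<subseteq> {x. \<psi> \<bullet> x = 1}"
      by (rule hull_minimal) (auto simp: B_def affine_hyperplane)
    then have "0 \<notin> affine hull B" by auto
    then have "aff_dim (insert 0 B) = aff_dim B + 1" by (simp add: aff_dim_insert)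
    moreover have "insert 0 B \<subseteq> span F" using span_zero span_superset[of F] by (auto simp: B_def)
    then have "aff_dim (insert 0 B) \<le> aff_dim (span F)" by (rule aff_dim_subset)
    moreover have "aff_dim (span F) = 2" using aff_dim_subspace[OF subspace_span, of F] assms(5) by simp
    ultimately show ?thesis unfolding collinear_aff_dim by linarith
  qed
  ultimately obtain p q where pq: "B = closed_segment p q"
    using compact_convex_collinear_segment by blast
  then have "p \<in> F" "q \<in> F" using ends_in_segment[of p q] by (auto simp: B_def)
  then show ?thesis using that pq scaled \<psi>_pos by blast
qed

lemma pointed_cone_dim_2_generators:
  fixes F :: "'a::euclidean_space set"
  assumes "closed F" "convex F" "cone F" "lineality_space F \<subseteq> {0}" "dim F = 2"
  obtains p q where "p \<in> F" "q \<in> F" "q \<notin> span {p}" "p \<notin> span {q}"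
    "\<And>y. y \<in> F \<Longrightarrow> \<exists>\<alpha> \<beta>. 0 \<le> \<alpha> \<and> 0 \<le> \<beta> \<and> y = \<alpha> *\<^sub>R p + \<beta> *\<^sub>R q"
proof -
  obtain p q \<psi> where pq: "p \<in> F" "q \<in> F"
    and base: "\<And>y. y \<in> F \<Longrightarrow> y \<noteq> 0 \<Longrightarrow> 0 < \<psi> \<bullet> y \<and> y /\<^sub>R (\<psi> \<bullet> y) \<in> closed_segment p q"
    by (rule pointed_cone_dim_2_base_segment[OF assms]) blast
  have gen: "\<exists>\<alpha> \<beta>. 0 \<le> \<alpha> \<and> 0 \<le> \<beta> \<and> y = \<alpha> *\<^sub>R p + \<beta> *\<^sub>R q" if y: "y \<in> F" for y
  proof (cases "y = 0")
    case False
    then obtain u where u: "0 \<le> u" "u \<le> 1" "y /\<^sub>R (\<psi> \<bullet> y) = (1 - u) *\<^sub>R p + u *\<^sub>R q"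
      and pos: "0 < \<psi> \<bullet> y"
      using base[OF y False] by (auto simp: in_segment)
    have "y = (\<psi> \<bullet> y) *\<^sub>R (y /\<^sub>R (\<psi> \<bullet> y))" using pos by simp
    also have "\<dots> = ((\<psi> \<bullet> y) * (1 - u)) *\<^sub>R p + ((\<psi> \<bullet> y) * u) *\<^sub>R q"
      unfolding u(3) by (simp add: scaleR_add_right)
    finally show ?thesis using pos u(1,2) by (intro exI conjI) auto
  qed (intro exI[of _ 0], simp)
  have not_in_span: "b \<notin> span {a}" if "{a, b} = {p, q}" for a b
  proof
    assume "b \<in> span {a}"
    then have "x \<in> span {a}" if "x \<in> {a, b}" for x using that by (auto intro: span_base)
    then have "p \<in> span {a}" "q \<in> span {a}" using \<open>{a, b} = {p, q}\<close> by auto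
    have "y \<in> span {a}" if "y \<in> F" for y
      using gen[OF that] span_add[OF span_scale[OF \<open>p \<in> span {a}\<close>] span_scale[OF \<open>q \<in> span {a}\<close>]]
      by blast
    then have "F \<subseteq> span {a}" by blast
    then have "dim F \<le> dim {a}" using dim_subset[of F "span {a}"] by simp
    moreover have "dim {a} \<le> 1" by (simp add: dim_insert)
    ultimately show False using assms(5) by simp
  qed
  show ?thesis using that pq gen not_in_span[of p q] not_in_span[of q p] by (simp add: insert_commute)
qed

lemma two_generated_cone_exposing_functional:
  fixes p q :: "'a::real_inner"
  assumes "\<And>y. y \<in> F \<Longrightarrow> \<exists>\<alpha> \<beta>. 0 \<le> \<alpha> \<and> 0 \<le> \<beta> \<and> y = \<alpha> *\<^sub>R p + \<beta> *\<^sub>R q"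
    "q \<notin> span {p}"
  obtains w where "\<And>y. y \<in> F \<Longrightarrow> 0 \<le> w \<bullet> y" "w \<bullet> p = 0" "0 < w \<bullet> q"
proof -
  define w where "w = q - ((q \<bullet> p) / (p \<bullet> p)) *\<^sub>R p"
  have wp: "w \<bullet> p = 0" by (cases "p = 0") (simp_all add: w_def inner_diff_left)
  have "w \<noteq> 0" using assms(2) by (auto simp: w_def span_singleton)
  moreover have wq: "w \<bullet> q = w \<bullet> w"
    using wp by (simp add: w_def inner_diff_right inner_commute)
  ultimately have "0 < w \<bullet> q" by simp
  moreover have "0 \<le> w \<bullet> y" if "y \<in> F" for y
    using assms(1)[OF that] wp wq by (auto simp: inner_add_right)
  ultimately show ?thesis using that wp by blast
qed

lemma infdist_ge_if_exposing_functional: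
  fixes w :: "'a::real_inner"
  assumes "F \<noteq> {}" "\<And>y. y \<in> F \<Longrightarrow> 0 \<le> w \<bullet> y" "w \<bullet> p = 0" "0 < w \<bullet> q"
  shows "(w \<bullet> q) / norm w \<le> infdist (s *\<^sub>R p - q) F"
proof (rule le_infdistI[OF assms(1)])
  fix y assume "y \<in> F"
  then have "w \<bullet> q \<le> w \<bullet> (y - (s *\<^sub>R p - q))" using assms(2,3) by (simp add: inner_diff_right)
  also have "\<dots> \<le> norm w * dist (s *\<^sub>R p - q) y"
    using norm_cauchy_schwarz[of w "y - (s *\<^sub>R p - q)"] by (simp add: dist_norm norm_minus_commute)
  finally show "(w \<bullet> q) / norm w \<le> dist (s *\<^sub>R p - q) y"
    using assms(4) by (cases "w = 0") (simp_all add: pos_divide_le_eq mult.commute)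
qed

lemma cone_line_separation:
  fixes K :: "'a::euclidean_space set"
  assumes K: "closed K" "convex K" "cone K" "K \<noteq> {}"
    and far: "\<delta> > 0" "\<And>s. \<delta> \<le> infdist (s *\<^sub>R p - q) K"
  obtains a where "\<And>x. x \<in> K \<Longrightarrow> 0 \<le> a \<bullet> x" "a \<bullet> p = 0" "0 < a \<bullet> q"
proof -
  define C where "C = (\<Union>k\<in>K. \<Union>v\<in>span {p}. {k + v})"
  have "convex C" unfolding C_def using convex_sums[OF K(2) subspace_imp_convex[OF subspace_span]] .
  moreover have "cone C"
    unfolding C_def cone_iff_conic using K(3) by (intro conic_sums) (simp_all add: cone_iff_conic)
  moreover have "0 \<in> K" using cone_contains_0[OF K(3)] K(4) by simp
  then have KC: "K \<subseteq> C" and pC: "p \<in> C" "- p \<in> C"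
    unfolding C_def using span_zero span_base[of p "{p}"] span_neg[of p "{p}"] by force+
  moreover have "- q \<notin> closure C"
  proof
    assume "- q \<in> closure C"
    then obtain c where c: "c \<in> C" "dist c (- q) < \<delta>" using far(1) closure_approachable by blast
    then obtain k s where ks: "k \<in> K" "c = k + s *\<^sub>R p" unfolding C_def by (auto simp: span_singleton)
    have "infdist ((- s) *\<^sub>R p - q) K \<le> dist ((- s) *\<^sub>R p - q) k" using infdist_le[OF ks(1)] .
    also have "\<dots> = dist c (- q)" using ks(2) by (simp add: dist_norm norm_minus_commute algebra_simps)
    finally show False using far(2)[of "- s"] c(2) by simp
  qed
  ultimately obtain a where a: "\<And>x. x \<in> closure C \<Longrightarrow> 0 \<le> a \<bullet> x" "a \<bullet> (- q) < 0"
    using cone_separation[of "closure C" "- q"] convex_closure cone_closure by blast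
  have aC: "0 \<le> a \<bullet> x" if "x \<in> C" for x using a(1) closure_subset that by blast
  show ?thesis
  proof
    show "0 \<le> a \<bullet> x" if "x \<in> K" for x using aC KC that by blast
    show "a \<bullet> p = 0" using aC[OF pC(1)] aC[OF pC(2)] by simp
    show "0 < a \<bullet> q" using a(2) by simp
  qed
qed

lemma error_bound_extends_exposing_functional:
  fixes K :: "'a::euclidean_space set"
  assumes K: "closed K" "convex K" "cone K"
    and F: "F \<subseteq> K" "F \<noteq> {}"
    and \<kappa>: "\<kappa> > 0" "\<forall>x\<in>span F. infdist x F \<le> \<kappa> * infdist x K"
    and w: "\<And>y. y \<in> F \<Longrightarrow> 0 \<le> w \<bullet> y" "w \<bullet> p = 0" "0 < w \<bullet> q"
    and pq: "p \<in> span F" "q \<in> span F"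
  obtains a where "\<And>x. x \<in> K \<Longrightarrow> 0 \<le> a \<bullet> x" "a \<bullet> p = 0" "0 < a \<bullet> q"
proof (rule cone_line_separation[OF K])
  have "w \<noteq> 0" using w(3) by auto
  show "K \<noteq> {}" using F by blast
  show "0 < (w \<bullet> q) / (norm w * \<kappa>)" using w(3) \<kappa>(1) \<open>w \<noteq> 0\<close> by simp
  fix s
  have "(w \<bullet> q) / norm w \<le> infdist (s *\<^sub>R p - q) F" using infdist_ge_if_exposing_functional[OF F(2) w] .
  also have "\<dots> \<le> \<kappa> * infdist (s *\<^sub>R p - q) K" using \<kappa>(2) pq by (simp add: span_diff span_scale)
  finally show "(w \<bullet> q) / (norm w * \<kappa>) \<le> infdist (s *\<^sub>R p - q) K"
    using \<kappa>(1) \<open>w \<noteq> 0\<close> by (simp add: field_simps)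
qed (use that in blast)+

lemma projectionally_exposed_face_pointed_dim_2:
  fixes K :: "'a::euclidean_space set"
  assumes K: "closed K" "convex K" "cone K" "lineality_space K \<subseteq> {0}"
    and F: "F face_of K" "F \<noteq> {}" "dim F = 2"
    and \<kappa>: "\<kappa> > 0" "\<forall>x\<in>span F. infdist x F \<le> \<kappa> * infdist x K"
  shows "projectionally_exposed_face F K"
proof -
  have FK: "F \<subseteq> K" using F(1) face_of_imp_subset by blast
  have "lineality_space F \<subseteq> {0}" using FK K(4) by (auto simp: lineality_space_def)
  then obtain p q where pq: "p \<in> F" "q \<in> F" "q \<notin> span {p}" "p \<notin> span {q}"
    and gen: "\<And>y. y \<in> F \<Longrightarrow> \<exists>\<alpha> \<beta>. 0 \<le> \<alpha> \<and> 0 \<le> \<beta> \<and> y = \<alpha> *\<^sub>R p + \<beta> *\<^sub>R q"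
    using pointed_cone_dim_2_generators[OF face_of_imp_closed[OF K(2,1) F(1)]
        face_of_imp_convex[OF F(1)] face_of_cone[OF K(3) F(1)] _ F(3)] by blast
  have expose: "\<exists>a. (\<forall>x\<in>K. 0 \<le> a \<bullet> x) \<and> a \<bullet> p' = 0 \<and> 0 < a \<bullet> q'"
    if pq': "p' \<in> F" "q' \<in> F" "q' \<notin> span {p'}"
      and gen': "\<And>y. y \<in> F \<Longrightarrow> \<exists>\<alpha> \<beta>. 0 \<le> \<alpha> \<and> 0 \<le> \<beta> \<and> y = \<alpha> *\<^sub>R p' + \<beta> *\<^sub>R q'" for p' q'
  proof -
    obtain w where "\<And>y. y \<in> F \<Longrightarrow> 0 \<le> w \<bullet> y" "w \<bullet> p' = 0" "0 < w \<bullet> q'"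
      using two_generated_cone_exposing_functional[OF gen' pq'(3)] by blast
    then obtain a where "\<And>x. x \<in> K \<Longrightarrow> 0 \<le> a \<bullet> x" "a \<bullet> p' = 0" "0 < a \<bullet> q'"
      by (rule error_bound_extends_exposing_functional[OF K(1-3) FK F(2) \<kappa> _ _ _
            span_base[OF pq'(1)] span_base[OF pq'(2)]]) blast+
    then show ?thesis by blast
  qed
  obtain a where a: "\<And>x. x \<in> K \<Longrightarrow> 0 \<le> a \<bullet> x" "a \<bullet> p = 0" "0 < a \<bullet> q"
    using expose[OF pq(1-3) gen] by blast
  have gen_qp: "\<exists>\<alpha> \<beta>. 0 \<le> \<alpha> \<and> 0 \<le> \<beta> \<and> y = \<alpha> *\<^sub>R q + \<beta> *\<^sub>R p" if "y \<in> F" for y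
    using gen[OF that] by (metis add.commute)
  obtain b where b: "\<And>x. x \<in> K \<Longrightarrow> 0 \<le> b \<bullet> x" "b \<bullet> q = 0" "0 < b \<bullet> p"
    using expose[OF pq(2,1,4) gen_qp] by blast
  have "p \<noteq> q" using pq(3) span_base by blast
  show ?thesis
  proof (rule projectionally_exposed_face_if_dual_functionals[OF K(2,3) F(1,2),
        where G = "{p, q}" and a = "\<lambda>g. if g = p then b /\<^sub>R (b \<bullet> p) else a /\<^sub>R (a \<bullet> q)"])
    show "F \<subseteq> span (lineality_space K \<union> {p, q})"
    proof
      fix y assume "y \<in> F"
      then obtain \<alpha> \<beta> where "y = \<alpha> *\<^sub>R p + \<beta> *\<^sub>R q" using gen by blast
      then show "y \<in> span (lineality_space K \<union> {p, q})"
        by (simp add: span_add span_scale span_base)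
    qed
  qed (use pq(1,2) K(4) a b \<open>p \<noteq> q\<close> in auto)
qed

lemma projectionally_exposed_face_error_bound:
  fixes K :: "'a::euclidean_space set"
  assumes "projectionally_exposed_face F K" "K \<noteq> {}"
  shows "\<exists>\<kappa>>0. \<forall>x\<in>span F. infdist x F \<le> \<kappa> * infdist x K"
proof -
  obtain P where P: "linear P" "P \<circ> P = P" "P ` K = F"
    using assms(1) unfolding projectionally_exposed_face_def by blast
  obtain B where B: "B > 0" "\<And>x. norm (P x) \<le> B * norm x"
    using linear_bounded_pos[OF P(1)] by blast
  have "P y = y" if "y \<in> F" for y using that P(2,3) by (auto simp: fun_eq_iff)
  then have fix_span: "P x = x" if "x \<in> span F" for x
    using linear_eq_on_span[OF P(1) linear_id, of F x] that by simp
  have "infdist x F \<le> B * infdist x K" if x: "x \<in> span F" for x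
  proof -
    have "infdist x F / B \<le> infdist x K"
    proof (rule le_infdistI[OF assms(2)])
      fix k assume "k \<in> K"
      then have "infdist x F \<le> dist x (P k)" using P(3) infdist_le by blast
      also have "dist x (P k) = norm (P (x - k))"
        using fix_span[OF x] linear_diff[OF P(1)] by (simp add: dist_norm)
      also have "\<dots> \<le> B * dist x k" using B(2) by (simp add: dist_norm)
      finally show "infdist x F / B \<le> dist x k" using B(1) by (simp add: divide_le_eq mult.commute)
    qed
    then show ?thesis using B(1) by (simp add: divide_le_eq mult.commute)
  qed
  then show ?thesis using B(1) by blast
qed

lemma error_bound_face_projectionally_exposed_dim_le_4:
  fixes K :: "'a::euclidean_space set"
  assumes K: "closed K" "convex K" "cone K" "dim K \<le> 4"
    and F: "is_face F K"
    and \<kappa>: "\<kappa> > 0" "\<forall>x\<in>span F. infdist x F \<le> \<kappa> * infdist x K"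
  shows "projectionally_exposed_face F K"
proof -
  let ?L = "lineality_space K"
  have Ff: "F face_of K" "F \<noteq> {}" using F by (auto simp: is_face_def)
  have FK: "F \<subseteq> K" using face_of_imp_subset[OF Ff(1)] .
  have "dim ?L \<le> dim F" using dim_subset[OF lineality_space_subset_face[OF Ff(1) K(3) Ff(2)]] .
  moreover have "dim F \<le> dim K" using dim_subset[OF FK] .
  \<comment> \<open>Outside the first four cases, \<open>dim L + 2 \<le> dim F \<le> dim K - 2 \<le> 2\<close>.\<close>
  ultimately consider "dim K \<le> dim F" | "dim F + 1 = dim K" | "dim F \<le> dim ?L"
    | "dim F = dim ?L + 1" | "dim F = 2" "dim ?L = 0"
    using K(4) by linarith
  then show ?thesis
  proof cases
    case 1
    then have "K \<subseteq> span F" using dim_eq_span[OF FK] span_superset[of K] by auto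
    then have "F = K" using face_of_cone_Int_span_subset[OF Ff(1) K(2,3) Ff(2)] FK by blast
    then show ?thesis using projectionally_exposed_faceI[OF linear_id, of K K] by simp
  next
    case 2
    then show ?thesis using projectionally_exposed_facet[OF K(2,3) Ff 2 \<kappa>] by blast
  next
    case 3
    then show ?thesis using projectionally_exposed_face_dim_le_lineality[OF K(2,3) Ff] by blast
  next
    case 4
    then show ?thesis using projectionally_exposed_face_dim_lineality_Suc[OF K(1-3) Ff] by blast
  next
    case 5
    then show ?thesis using projectionally_exposed_face_pointed_dim_2[OF K(1-3) _ Ff 5(1) \<kappa>] by simp
  qed
qed

theorem corollary6p4:
  fixes K :: "'a::euclidean_space set"
  assumes "closed K" and "convex K" and "cone K" and "K \<noteq> {}"
    and "dim K \<le> 4"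
  shows "amenable K \<longleftrightarrow> projectionally_exposed K"
proof
  assume "amenable K"
  then show "projectionally_exposed K"
    unfolding amenable_def projectionally_exposed_def
    using error_bound_face_projectionally_exposed_dim_le_4[OF assms(1-3,5)] by blast
next
  assume "projectionally_exposed K"
  then show "amenable K"
    unfolding amenable_def projectionally_exposed_def
    using projectionally_exposed_face_error_bound assms(4) by blast
qed

end
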